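(* Let $(r_I)_I$ be a family of idempotent functions $r_I:[0,1]^I\times[0,1]\to[0,1]^I\times[0,1]$ (one for each finite set of names $I$) satisfying (1) $r_I(u,z)=(u,z)$ iff $\partial_I u=1$ or $z=0$, and (2) $r_J(f\times\mathrm{id})r_I=r_J(f\times\mathrm{id})$ for every strict $f\in\mathrm{Hom}(I,J)$. Then there is a unique family of functions $r_\psi:[0,1]^I\times[0,1]\to[0,1]^I\times[0,1]$, indexed by finite sets of names $I$ and $\psi\in\mathbb{F}(I)$, such that: (a) $r_\psi=\mathrm{id}$ if $\psi=1_\mathbb{F}$; (b) $r_\psi=r_\psi\circ r_I$ if $\psi\neq 1_\mathbb{F}$; (c) $r_\psi(u,z)=(u,z)$ if $z=0$; (d) $r_\psi\circ((ib)\times\mathrm{id})=((ib)\times\mathrm{id})\circ r_{\psi(ib)}$ for all $i\in I$, $b\in\{0,1\}$. Moreover each $r_\psi$ is idempotent and its fixed points are exactly the $(u,z)$ with $\psi u=1$ or $z=0$.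
   Context: Fix a countably infinite set of names. $\mathsf{dM}(J)$ is the free de Morgan algebra on $J$. The cube category $\mathcal{C}$ has finite sets of names as objects; $f\in\mathrm{Hom}(I,J)$ is a map $J\to\mathsf{dM}(I)$, composed by substitution; $f$ is strict if it never takes value $0$ or $1$. Using the de Morgan algebra $([0,1],\min,\max,1-x)$, $f\in\mathrm{Hom}(I,J)$ induces $f:[0,1]^I\to[0,1]^J$, $(fu)_j=f(j)$ evaluated at $u$. For $i\in I$ and $b\in\{0,1\}$, the face map $(ib)\in\mathrm{Hom}(I-\{i\},I)$ sends $i\mapsto b$ and $j\mapsto j$ otherwise; it induces $[0,1]^{I-\{i\}}\to[0,1]^I$ inserting the value $b$ at coordinate $i$. The face lattice $\mathbb{F}$ is the distributive lattice generated by $(i=0),(i=1)$ for names $i$ subject to $(i=0)\wedge(i=1)=0_\mathbb{F}$; $\mathbb{F}(I)$ is the sublattice generated by generators with $i\in I$. For $\psi\in\mathbb{F}(I)$ and $u\in[0,1]^I$, the truth value $\psi u$ is computed by interpreting $(i=0)$ as "$u_i=0$", $(i=1)$ as "$u_i=1$", $\wedge,\vee$ as conjunction/disjunction. $\psi(ib)\in\mathbb{F}(I-\{i\})$ is obtained by substituting $(i=b)\mapsto1_\mathbb{F}$, $(i=1-b)\mapsto 0_\mathbb{F}$. $\partial_I=\bigvee_{i\in I}((i=0)\vee(i=1))$, so $\partial_I u=1$ iff some $u_i\in\{0,1\}$. *)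

theory Defs
  imports Complex_Main
begin

type_synonym name = nat

datatype dm = DVar name | DZero | DOne | DMeet dm dm | DJoin dm dm | DNeg dm

fun dm_vars :: "dm \<Rightarrow> name set" where
  "dm_vars (DVar i) = {i}"
| "dm_vars DZero = {}"
| "dm_vars DOne = {}"
| "dm_vars (DMeet a b) = dm_vars a \<union> dm_vars b"
| "dm_vars (DJoin a b) = dm_vars a \<union> dm_vars b"
| "dm_vars (DNeg a) = dm_vars a"

text \<open>Equality in the free de Morgan algebra: the least congruence containing the
  axioms of bounded distributive lattices with an involutive de Morgan negation.\<close>
inductive dm_eq :: "dm \<Rightarrow> dm \<Rightarrow> bool" where
  dm_refl: "dm_eq a a"
| dm_sym: "dm_eq a b \<Longrightarrow> dm_eq b a"
| dm_trans: "dm_eq a b \<Longrightarrow> dm_eq b c \<Longrightarrow> dm_eq a c"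
| dm_cong_meet: "dm_eq a a' \<Longrightarrow> dm_eq b b' \<Longrightarrow> dm_eq (DMeet a b) (DMeet a' b')"
| dm_cong_join: "dm_eq a a' \<Longrightarrow> dm_eq b b' \<Longrightarrow> dm_eq (DJoin a b) (DJoin a' b')"
| dm_cong_neg: "dm_eq a a' \<Longrightarrow> dm_eq (DNeg a) (DNeg a')"
| dm_meet_assoc: "dm_eq (DMeet (DMeet a b) c) (DMeet a (DMeet b c))"
| dm_join_assoc: "dm_eq (DJoin (DJoin a b) c) (DJoin a (DJoin b c))"
| dm_meet_comm: "dm_eq (DMeet a b) (DMeet b a)"
| dm_join_comm: "dm_eq (DJoin a b) (DJoin b a)"
| dm_absorb1: "dm_eq (DMeet a (DJoin a b)) a"
| dm_absorb2: "dm_eq (DJoin a (DMeet a b)) a"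
| dm_distrib1: "dm_eq (DMeet a (DJoin b c)) (DJoin (DMeet a b) (DMeet a c))"
| dm_distrib2: "dm_eq (DJoin a (DMeet b c)) (DMeet (DJoin a b) (DJoin a c))"
| dm_meet_one: "dm_eq (DMeet a DOne) a"
| dm_join_zero: "dm_eq (DJoin a DZero) a"
| dm_meet_zero: "dm_eq (DMeet a DZero) DZero"
| dm_join_one: "dm_eq (DJoin a DOne) DOne"
| dm_neg_neg: "dm_eq (DNeg (DNeg a)) a"
| dm_neg_meet: "dm_eq (DNeg (DMeet a b)) (DJoin (DNeg a) (DNeg b))"
| dm_neg_zero: "dm_eq (DNeg DZero) DOne"
| dm_neg_one: "dm_eq (DNeg DOne) DZero"

fun dm_eval :: "(name \<Rightarrow> real) \<Rightarrow> dm \<Rightarrow> real" where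
  "dm_eval u (DVar i) = u i"
| "dm_eval u DZero = 0"
| "dm_eval u DOne = 1"
| "dm_eval u (DMeet a b) = min (dm_eval u a) (dm_eval u b)"
| "dm_eval u (DJoin a b) = max (dm_eval u a) (dm_eval u b)"
| "dm_eval u (DNeg a) = 1 - dm_eval u a"

text \<open>f \<in> Hom(I,J): a map J \<rightarrow> dM(I) (represented by terms in the variables I).\<close>
definition is_hom :: "name set \<Rightarrow> name set \<Rightarrow> (name \<Rightarrow> dm) \<Rightarrow> bool" where
  "is_hom I J f \<longleftrightarrow> (\<forall>j\<in>J. dm_vars (f j) \<subseteq> I)"

definition strict_hom :: "name set \<Rightarrow> (name \<Rightarrow> dm) \<Rightarrow> bool" where
  "strict_hom J f \<longleftrightarrow> (\<forall>j\<in>J. \<not> dm_eq (f j) DZero \<and> \<not> dm_eq (f j) DOne)"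

definition cube :: "name set \<Rightarrow> (name \<Rightarrow> real) set" where
  "cube I = {u. (\<forall>i\<in>I. 0 \<le> u i \<and> u i \<le> 1) \<and> (\<forall>i. i \<notin> I \<longrightarrow> u i = 0)}"

definition rdom :: "name set \<Rightarrow> ((name \<Rightarrow> real) \<times> real) set" where
  "rdom I = cube I \<times> {0..1}"

definition hom_map :: "name set \<Rightarrow> (name \<Rightarrow> dm) \<Rightarrow> (name \<Rightarrow> real) \<Rightarrow> (name \<Rightarrow> real)" where
  "hom_map J f u = (\<lambda>j. if j \<in> J then dm_eval u (f j) else 0)"

definition face_ins :: "name \<Rightarrow> bool \<Rightarrow> (name \<Rightarrow> real) \<Rightarrow> (name \<Rightarrow> real)" where
  "face_ins i b u = u(i := (if b then 1 else 0))"

definition bdry :: "name set \<Rightarrow> (name \<Rightarrow> real) \<Rightarrow> bool" where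
  "bdry I u \<longleftrightarrow> (\<exists>i\<in>I. u i = 0 \<or> u i = 1)"

datatype face = FEq0 name | FEq1 name | FTop | FBot | FMeet face face | FJoin face face

fun face_vars :: "face \<Rightarrow> name set" where
  "face_vars (FEq0 i) = {i}"
| "face_vars (FEq1 i) = {i}"
| "face_vars FTop = {}"
| "face_vars FBot = {}"
| "face_vars (FMeet a b) = face_vars a \<union> face_vars b"
| "face_vars (FJoin a b) = face_vars a \<union> face_vars b"

inductive face_eq :: "face \<Rightarrow> face \<Rightarrow> bool" where
  fe_refl: "face_eq a a"
| fe_sym: "face_eq a b \<Longrightarrow> face_eq b a"
| fe_trans: "face_eq a b \<Longrightarrow> face_eq b c \<Longrightarrow> face_eq a c"
| fe_cong_meet: "face_eq a a' \<Longrightarrow> face_eq b b' \<Longrightarrow> face_eq (FMeet a b) (FMeet a' b')"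
| fe_cong_join: "face_eq a a' \<Longrightarrow> face_eq b b' \<Longrightarrow> face_eq (FJoin a b) (FJoin a' b')"
| fe_meet_assoc: "face_eq (FMeet (FMeet a b) c) (FMeet a (FMeet b c))"
| fe_join_assoc: "face_eq (FJoin (FJoin a b) c) (FJoin a (FJoin b c))"
| fe_meet_comm: "face_eq (FMeet a b) (FMeet b a)"
| fe_join_comm: "face_eq (FJoin a b) (FJoin b a)"
| fe_absorb1: "face_eq (FMeet a (FJoin a b)) a"
| fe_absorb2: "face_eq (FJoin a (FMeet a b)) a"
| fe_distrib1: "face_eq (FMeet a (FJoin b c)) (FJoin (FMeet a b) (FMeet a c))"
| fe_distrib2: "face_eq (FJoin a (FMeet b c)) (FMeet (FJoin a b) (FJoin a c))"
| fe_meet_top: "face_eq (FMeet a FTop) a"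
| fe_join_bot: "face_eq (FJoin a FBot) a"
| fe_meet_bot: "face_eq (FMeet a FBot) FBot"
| fe_join_top: "face_eq (FJoin a FTop) FTop"
| fe_disj: "face_eq (FMeet (FEq0 i) (FEq1 i)) FBot"

text \<open>psi \<in> F(I): represented by a term in generators with names in I.\<close>
definition in_FI :: "name set \<Rightarrow> face \<Rightarrow> bool" where
  "in_FI I \<psi> \<longleftrightarrow> face_vars \<psi> \<subseteq> I"

fun face_val :: "face \<Rightarrow> (name \<Rightarrow> real) \<Rightarrow> bool" where
  "face_val (FEq0 i) u = (u i = 0)"
| "face_val (FEq1 i) u = (u i = 1)"
| "face_val FTop u = True"
| "face_val FBot u = False"
| "face_val (FMeet a b) u = (face_val a u \<and> face_val b u)"
| "face_val (FJoin a b) u = (face_val a u \<or> face_val b u)"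

fun face_restr :: "face \<Rightarrow> name \<Rightarrow> bool \<Rightarrow> face" where
  "face_restr (FEq0 j) i b = (if j = i then (if b then FBot else FTop) else FEq0 j)"
| "face_restr (FEq1 j) i b = (if j = i then (if b then FTop else FBot) else FEq1 j)"
| "face_restr FTop i b = FTop"
| "face_restr FBot i b = FBot"
| "face_restr (FMeet a c) i b = FMeet (face_restr a i b) (face_restr c i b)"
| "face_restr (FJoin a c) i b = FJoin (face_restr a i b) (face_restr c i b)"

type_synonym pt = "(name \<Rightarrow> real) \<times> real"

definition base_family :: "(name set \<Rightarrow> pt \<Rightarrow> pt) \<Rightarrow> bool" where
  "base_family r \<longleftrightarrow>
    (\<forall>I. finite I \<longrightarrow>
       (\<forall>x\<in>rdom I. r I x \<in> rdom I \<and> r I (r I x) = r I x) \<and>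
       (\<forall>u z. (u, z) \<in> rdom I \<longrightarrow> (r I (u, z) = (u, z) \<longleftrightarrow> bdry I u \<or> z = 0))) \<and>
    (\<forall>I J f. finite I \<longrightarrow> finite J \<longrightarrow> is_hom I J f \<longrightarrow> strict_hom J f \<longrightarrow>
       (\<forall>u z. (u, z) \<in> rdom I \<longrightarrow>
          r J (hom_map J f (fst (r I (u, z))), snd (r I (u, z))) = r J (hom_map J f u, z)))"

text \<open>Conditions on a family r_psi (indexed by finite I and psi \<in> F(I)): well-defined on
  elements of F (independent of representative), maps [0,1]^I\<times>[0,1] into itself, and (a)-(d).\<close>
definition face_family :: "(name set \<Rightarrow> pt \<Rightarrow> pt) \<Rightarrow> (name set \<Rightarrow> face \<Rightarrow> pt \<Rightarrow> pt) \<Rightarrow> bool" where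
  "face_family r rp \<longleftrightarrow>
    (\<forall>I \<psi>. finite I \<longrightarrow> in_FI I \<psi> \<longrightarrow>
       (\<forall>x\<in>rdom I. rp I \<psi> x \<in> rdom I) \<and>
       (\<forall>\<psi>'. in_FI I \<psi>' \<longrightarrow> face_eq \<psi> \<psi>' \<longrightarrow> (\<forall>x\<in>rdom I. rp I \<psi> x = rp I \<psi>' x)) \<and>
       (face_eq \<psi> FTop \<longrightarrow> (\<forall>x\<in>rdom I. rp I \<psi> x = x)) \<and>
       (\<not> face_eq \<psi> FTop \<longrightarrow> (\<forall>x\<in>rdom I. rp I \<psi> x = rp I \<psi> (r I x))) \<and>
       (\<forall>u. (u, 0) \<in> rdom I \<longrightarrow> rp I \<psi> (u, 0) = (u, 0)) \<and>
       (\<forall>i\<in>I. \<forall>b. \<forall>u z. (u, z) \<in> rdom (I - {i}) \<longrightarrow>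
          rp I \<psi> (face_ins i b u, z) =
            (face_ins i b (fst (rp (I - {i}) (face_restr \<psi> i b) (u, z))),
             snd (rp (I - {i}) (face_restr \<psi> i b) (u, z)))))"

end

theory Submission
  imports Defs
begin

text \<open>For \<psi> \<noteq> 1 the retraction r_\<psi> is forced by recursion on |I|: first apply r_I; the result
  has z = 0 (and is then fixed) or lies on some face u_i = b, where (d) prescribes the value via
  the retraction for \<psi>(ib) on I - {i}. This defines r_\<psi> once a face is chosen, and uniqueness
  is the same induction. The real content is that the choice does not matter: r_I fixes boundary
  points, and two faces i \<noteq> j lead by induction to the common face of codimension two, where the
  face inclusions commute. Every value satisfies \<psi> or has z = 0, and such points are fixed,
  since \<psi> \<noteq> 1 can only hold on the boundary.\<close>

lemma face_eq_sound: "face_eq \<phi> \<psi> \<Longrightarrow> face_val \<phi> = face_val \<psi>"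
  by (induction rule: face_eq.induct) (auto simp: fun_eq_iff)

lemma face_eq_FTop_if_val_interior:
  assumes "face_val \<psi> u" and "\<forall>i\<in>face_vars \<psi>. u i \<noteq> 0 \<and> u i \<noteq> 1"
  shows "face_eq \<psi> FTop"
  using assms
proof (induction \<psi>)
  case (FMeet \<phi> \<psi>)
  then have "face_eq (FMeet \<phi> \<psi>) (FMeet FTop FTop)" by (simp add: fe_cong_meet)
  then show ?case using fe_trans fe_meet_top by blast
next
  case (FJoin \<phi> \<psi>)
  have join_top: "face_eq (FJoin FTop \<psi>) FTop" using fe_trans fe_join_comm fe_join_top by blast
  show ?case
  proof (cases "face_val \<phi> u")
    case True
    then have "face_eq (FJoin \<phi> \<psi>) (FJoin FTop \<psi>)" using FJoin by (simp add: fe_cong_join fe_refl)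
    then show ?thesis using join_top fe_trans by blast
  next
    case False
    then have "face_eq (FJoin \<phi> \<psi>) (FJoin \<phi> FTop)" using FJoin by (simp add: fe_cong_join fe_refl)
    then show ?thesis using fe_trans fe_join_top by blast
  qed
qed (auto intro: fe_refl)

lemma face_eq_FTop_if_val_not_bdry:
  "in_FI I \<psi> \<Longrightarrow> face_val \<psi> u \<Longrightarrow> \<not> bdry I u \<Longrightarrow> face_eq \<psi> FTop"
  unfolding in_FI_def bdry_def by (rule face_eq_FTop_if_val_interior) auto

lemma face_eq_FTop_iff:
  assumes "in_FI I \<psi>"
  shows "face_eq \<psi> FTop \<longleftrightarrow> (\<forall>u\<in>cube I. face_val \<psi> u)"
proof
  assume "\<forall>u\<in>cube I. face_val \<psi> u"
  moreover have "(\<lambda>i. if i \<in> I then 1/2 else 0) \<in> cube I" by (auto simp: cube_def)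
  ultimately show "face_eq \<psi> FTop"
    using face_eq_FTop_if_val_not_bdry[OF assms] by (force simp: bdry_def)
qed (use face_eq_sound in fastforce)

lemma face_val_face_restr: "face_val (face_restr \<psi> i b) = face_val \<psi> \<circ> face_ins i b"
  by (rule ext, induction \<psi>) (auto simp: face_ins_def)

lemma face_vars_face_restr: "face_vars (face_restr \<psi> i b) \<subseteq> face_vars \<psi> - {i}"
  by (induction \<psi>) auto

lemma in_FI_face_restr: "in_FI I \<psi> \<Longrightarrow> in_FI (I - {i}) (face_restr \<psi> i b)"
  using face_vars_face_restr unfolding in_FI_def by blast

lemma rdom_iff: "(u, z) \<in> rdom I \<longleftrightarrow> u \<in> cube I \<and> 0 \<le> z \<and> z \<le> 1"
  by (simp add: rdom_def)

lemma face_ins_cube: "i \<in> I \<Longrightarrow> u \<in> cube (I - {i}) \<Longrightarrow> face_ins i b u \<in> cube I"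
  by (auto simp: cube_def face_ins_def)

lemma upd_zero_rdom: "(v, z) \<in> rdom I \<Longrightarrow> (v(i := 0), z) \<in> rdom (I - {i})"
  by (auto simp: rdom_iff cube_def)

lemma face_ins_upd_zero: "v i = 0 \<or> v i = 1 \<Longrightarrow> face_ins i (v i = 1) (v(i := 0)) = v"
  by (auto simp: face_ins_def)

lemma upd_zero_face_ins: "(u, z) \<in> rdom (I - {i}) \<Longrightarrow> (face_ins i b u)(i := 0) = u"
  by (auto simp: rdom_iff cube_def face_ins_def)

lemma face_ins_commute: "i \<noteq> j \<Longrightarrow> face_ins i b \<circ> face_ins j c = face_ins j c \<circ> face_ins i b"
  by (auto simp: face_ins_def fun_upd_twist)

lemma bdry_face_ins: "i \<in> I \<Longrightarrow> bdry I (face_ins i b u)"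
  by (auto simp: bdry_def face_ins_def)

lemma base_family_rdom: "base_family r \<Longrightarrow> finite I \<Longrightarrow> x \<in> rdom I \<Longrightarrow> r I x \<in> rdom I"
  unfolding base_family_def by blast

lemma base_family_idem: "base_family r \<Longrightarrow> finite I \<Longrightarrow> x \<in> rdom I \<Longrightarrow> r I (r I x) = r I x"
  unfolding base_family_def by blast

lemma base_family_fixed_iff:
  "base_family r \<Longrightarrow> finite I \<Longrightarrow> (u, z) \<in> rdom I \<Longrightarrow> r I (u, z) = (u, z) \<longleftrightarrow> bdry I u \<or> z = 0"
  unfolding base_family_def by blast

lemma base_family_image:
  assumes "base_family r" "finite I" "x \<in> rdom I" "r I x = (v, z)"
  shows "bdry I v \<or> z = 0"
  using assms base_family_rdom[OF assms(1-3)] base_family_idem[OF assms(1-3)]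
    base_family_fixed_iff[OF assms(1,2), of v z] by simp

definition bdry_coord :: "name set \<Rightarrow> (name \<Rightarrow> real) \<Rightarrow> name" where
  "bdry_coord I v = (SOME i. i \<in> I \<and> (v i = 0 \<or> v i = 1))"

lemma bdry_coord: "bdry I v \<Longrightarrow> bdry_coord I v \<in> I \<and> (v (bdry_coord I v) = 0 \<or> v (bdry_coord I v) = 1)"
  unfolding bdry_coord_def bdry_def by (rule someI_ex) blast

text \<open>A face \<psi> enters only through its truth-value predicate P = face_val \<psi>, so that \<psi>(ib)
  becomes P \<circ> face_ins i b (see face_val_face_restr). The fuel card I suffices because every
  recursive call removes one name.\<close>

primrec face_retraction_fuel ::
  "nat \<Rightarrow> (name set \<Rightarrow> pt \<Rightarrow> pt) \<Rightarrow> name set \<Rightarrow> ((name \<Rightarrow> real) \<Rightarrow> bool) \<Rightarrow> pt \<Rightarrow> pt" where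
  "face_retraction_fuel 0 r I P x = (if \<forall>u\<in>cube I. P u then x else r I x)"
| "face_retraction_fuel (Suc n) r I P x =
    (if \<forall>u\<in>cube I. P u then x
     else let (v, z) = r I x in
       if z = 0 \<or> \<not> bdry I v then (v, z)
       else let j = bdry_coord I v; b = (v j = 1) in
         apfst (face_ins j b) (face_retraction_fuel n r (I - {j}) (P \<circ> face_ins j b) (v(j := 0), z)))"

definition face_retraction ::
  "(name set \<Rightarrow> pt \<Rightarrow> pt) \<Rightarrow> name set \<Rightarrow> ((name \<Rightarrow> real) \<Rightarrow> bool) \<Rightarrow> pt \<Rightarrow> pt" where
  "face_retraction r I P = face_retraction_fuel (card I) r I P"

lemma face_retraction_top: "\<forall>u\<in>cube I. P u \<Longrightarrow> face_retraction r I P x = x"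
  unfolding face_retraction_def by (cases "card I") simp_all

lemma face_retraction_stop:
  assumes "\<not> (\<forall>u\<in>cube I. P u)" "r I x = (v, z)" "z = 0 \<or> \<not> bdry I v"
  shows "face_retraction r I P x = (v, z)"
  using assms(2,3) unfolding face_retraction_def by (cases "card I") (simp_all add: assms(1))

lemma face_retraction_step:
  assumes "finite I" "\<not> (\<forall>u\<in>cube I. P u)" "r I x = (v, z)" "z \<noteq> 0" "bdry I v"
    and "j = bdry_coord I v"
  shows "face_retraction r I P x =
    apfst (face_ins j (v j = 1)) (face_retraction r (I - {j}) (P \<circ> face_ins j (v j = 1)) (v(j := 0), z))"
proof -
  have "j \<in> I" using bdry_coord[OF assms(5)] assms(6) by simp
  then have "card I = Suc (card (I - {j}))" using card_Suc_Diff1[OF assms(1)] by simp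
  then show ?thesis using assms(3-6) unfolding face_retraction_def by (simp add: assms(2) Let_def)
qed

context
  fixes r :: "name set \<Rightarrow> pt \<Rightarrow> pt"
  assumes base: "base_family r"
begin

lemma face_retraction_rdom:
  assumes "finite I" "x \<in> rdom I"
  shows "face_retraction r I P x \<in> rdom I"
  using assms
proof (induction "card I" arbitrary: I P x rule: less_induct)
  case less
  obtain v z where vz: "r I x = (v, z)" by fastforce
  have vz_rdom: "(v, z) \<in> rdom I" using base_family_rdom[OF base less.prems] vz by simp
  consider "\<forall>u\<in>cube I. P u" | "\<not> (\<forall>u\<in>cube I. P u)" "z = 0 \<or> \<not> bdry I v"
    | "\<not> (\<forall>u\<in>cube I. P u)" "z \<noteq> 0" "bdry I v" by blast
  then show ?case
  proof cases
    case 1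
    then show ?thesis using less.prems(2) by (simp add: face_retraction_top)
  next
    case 2
    then show ?thesis using face_retraction_stop[where r=r, OF 2(1) vz 2(2)] vz_rdom by simp
  next
    case 3
    define j where "j = bdry_coord I v"
    have j: "j \<in> I" using bdry_coord[OF 3(3)] j_def by simp
    have "face_retraction r (I - {j}) (P \<circ> face_ins j (v j = 1)) (v(j := 0), z) \<in> rdom (I - {j})"
      using less.hyps[OF card_Diff1_less[OF less.prems(1) j] finite_Diff[OF less.prems(1)] upd_zero_rdom[OF vz_rdom]] .
    then show ?thesis using face_retraction_step[where r=r, OF less.prems(1) 3(1) vz 3(2,3) j_def] face_ins_cube[OF j]
      by (cases "face_retraction r (I - {j}) (P \<circ> face_ins j (v j = 1)) (v(j := 0), z)") (simp add: rdom_iff)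
  qed
qed

lemma face_retraction_image:
  assumes "finite I" "x \<in> rdom I"
  shows "P (fst (face_retraction r I P x)) \<or> snd (face_retraction r I P x) = 0"
  using assms
proof (induction "card I" arbitrary: I P x rule: less_induct)
  case less
  obtain v z where vz: "r I x = (v, z)" by fastforce
  have vz_rdom: "(v, z) \<in> rdom I" using base_family_rdom[OF base less.prems] vz by simp
  consider "\<forall>u\<in>cube I. P u" | "\<not> (\<forall>u\<in>cube I. P u)" "z = 0 \<or> \<not> bdry I v"
    | "\<not> (\<forall>u\<in>cube I. P u)" "z \<noteq> 0" "bdry I v" by blast
  then show ?case
  proof cases
    case 1
    then show ?thesis using less.prems(2) by (cases x) (simp add: face_retraction_top rdom_iff)
  next
    case 2
    then show ?thesis
      using face_retraction_stop[where r=r, OF 2(1) vz 2(2)] base_family_image[OF base less.prems vz] by auto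
  next
    case 3
    define j where "j = bdry_coord I v"
    have j: "j \<in> I" using bdry_coord[OF 3(3)] j_def by simp
    have "(P \<circ> face_ins j (v j = 1)) (fst (face_retraction r (I - {j}) (P \<circ> face_ins j (v j = 1)) (v(j := 0), z)))
        \<or> snd (face_retraction r (I - {j}) (P \<circ> face_ins j (v j = 1)) (v(j := 0), z)) = 0"
      using less.hyps[OF card_Diff1_less[OF less.prems(1) j] finite_Diff[OF less.prems(1)] upd_zero_rdom[OF vz_rdom]] .
    then show ?thesis using face_retraction_step[where r=r, OF less.prems(1) 3(1) vz 3(2,3) j_def] by simp
  qed
qed

lemma face_retraction_zero:
  assumes "finite I" "(u, 0) \<in> rdom I"
  shows "face_retraction r I P (u, 0) = (u, 0)"
proof (cases "\<forall>w\<in>cube I. P w")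
  case False
  moreover have "r I (u, 0) = (u, 0)" using base_family_fixed_iff[OF base assms] by simp
  ultimately show ?thesis using face_retraction_stop by simp
qed (rule face_retraction_top)

lemma face_retraction_absorb:
  assumes "finite I" "\<not> (\<forall>u\<in>cube I. P u)" "x \<in> rdom I"
  shows "face_retraction r I P (r I x) = face_retraction r I P x"
  unfolding face_retraction_def
  by (cases "card I") (simp_all add: assms(2) base_family_idem[OF base assms(1,3)])

lemma face_retraction_face:
  assumes "finite I" "i \<in> I" "(u, z) \<in> rdom (I - {i})"
  shows "face_retraction r I P (face_ins i b u, z) =
    apfst (face_ins i b) (face_retraction r (I - {i}) (P \<circ> face_ins i b) (u, z))"
  using assms
proof (induction "card I" arbitrary: I P i b u z rule: less_induct)
  case less
  define v where "v = face_ins i b u"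
  have u: "u \<in> cube (I - {i})" using less.prems(3) by (simp add: rdom_iff)
  have vz: "(v, z) \<in> rdom I" using face_ins_cube[OF less.prems(2) u] less.prems(3) by (simp add: v_def rdom_iff)
  show ?case
  proof (cases "\<forall>w\<in>cube I. P w")
    case True
    then have "\<forall>w\<in>cube (I - {i}). (P \<circ> face_ins i b) w" using face_ins_cube[OF less.prems(2)] by simp
    then show ?thesis using True by (simp add: face_retraction_top)
  next
    case nontop: False
    show ?thesis
    proof (cases "z = 0")
      case True
      then show ?thesis
        using face_retraction_zero less.prems(1,3) vz finite_Diff by (simp add: v_def[symmetric])
    next
      case False
      have bdry_v: "bdry I v" using bdry_face_ins[OF less.prems(2)] by (simp add: v_def)
      then have "r I (v, z) = (v, z)" using base_family_fixed_iff[OF base less.prems(1) vz] by simp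
      from face_retraction_step[where r=r, OF less.prems(1) nontop this False bdry_v refl]
      obtain j where j: "j \<in> I" "v j = 0 \<or> v j = 1" and step:
        "face_retraction r I P (v, z) =
          apfst (face_ins j (v j = 1)) (face_retraction r (I - {j}) (P \<circ> face_ins j (v j = 1)) (v(j := 0), z))"
        using bdry_coord[OF bdry_v] by blast
      show ?thesis
      proof (cases "j = i")
        case True
        moreover have "(v i = 1) = b" "v(i := 0) = u"
          using upd_zero_face_ins[OF less.prems(3)] by (auto simp: v_def face_ins_def)
        ultimately show ?thesis using step by (simp add: v_def)
      next
        case False
        define c where "c = (v j = 1)"
        define w where "w = u(j := 0)"
        have "u j = v j" using False by (simp add: v_def face_ins_def)
        then have u_eq: "u = face_ins j c w" using face_ins_upd_zero[of u j] j(2) by (simp add: c_def w_def)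
        have v_eq: "v(j := 0) = face_ins i b w" using False by (auto simp: v_def w_def face_ins_def)
        have swap: "I - {j} - {i} = I - {i} - {j}" by auto
        have w_i: "(w, z) \<in> rdom (I - {i} - {j})" using upd_zero_rdom[OF less.prems(3)] by (simp add: w_def)
        then have w_j: "(w, z) \<in> rdom (I - {j} - {i})" by (simp add: swap)
        have IH_j: "face_retraction r (I - {j}) (P \<circ> face_ins j c) (face_ins i b w, z) =
            apfst (face_ins i b) (face_retraction r (I - {i} - {j}) (P \<circ> face_ins j c \<circ> face_ins i b) (w, z))"
          using less.hyps[OF card_Diff1_less[OF less.prems(1) j(1)] finite_Diff[OF less.prems(1)] _ w_j]
            less.prems(2) False by (simp add: swap)
        have IH_i: "face_retraction r (I - {i}) (P \<circ> face_ins i b) (face_ins j c w, z) =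
            apfst (face_ins j c) (face_retraction r (I - {i} - {j}) (P \<circ> face_ins i b \<circ> face_ins j c) (w, z))"
          using less.hyps[OF card_Diff1_less[OF less.prems(1,2)] finite_Diff[OF less.prems(1)] _ w_i]
            j(1) False by simp
        have "face_retraction r I P (v, z) =
            apfst (face_ins j c) (face_retraction r (I - {j}) (P \<circ> face_ins j c) (face_ins i b w, z))"
          using step by (simp add: v_eq c_def)
        also have "\<dots> = apfst (face_ins j c \<circ> face_ins i b)
            (face_retraction r (I - {i} - {j}) (P \<circ> face_ins j c \<circ> face_ins i b) (w, z))"
          by (simp add: IH_j apfst_compose)
        also have "\<dots> = apfst (face_ins i b \<circ> face_ins j c)
            (face_retraction r (I - {i} - {j}) (P \<circ> face_ins i b \<circ> face_ins j c) (w, z))"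
          by (metis comp_assoc face_ins_commute[OF False])
        also have "\<dots> = apfst (face_ins i b) (face_retraction r (I - {i}) (P \<circ> face_ins i b) (u, z))"
          by (simp add: IH_i u_eq apfst_compose)
        finally show ?thesis by (simp add: v_def)
      qed
    qed
  qed
qed

lemma face_retraction_fixed:
  assumes "finite I" "in_FI I \<psi>" "(u, z) \<in> rdom I" "face_val \<psi> u"
  shows "face_retraction r I (face_val \<psi>) (u, z) = (u, z)"
  using assms
proof (induction "card I" arbitrary: I \<psi> u rule: less_induct)
  case less
  show ?case
  proof (cases "\<forall>w\<in>cube I. face_val \<psi> w")
    case False
    then have "bdry I u" using face_eq_FTop_if_val_not_bdry face_eq_FTop_iff less.prems(2,4) by blast
    then obtain j where j: "j \<in> I" "u j = 0 \<or> u j = 1" unfolding bdry_def by blast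
    define b where "b = (u j = 1)"
    have u_eq: "face_ins j b (u(j := 0)) = u" using face_ins_upd_zero[of u j] j(2) by (simp add: b_def)
    have "face_retraction r (I - {j}) (face_val (face_restr \<psi> j b)) (u(j := 0), z) = (u(j := 0), z)"
      using less.hyps[OF card_Diff1_less[OF less.prems(1) j(1)] finite_Diff[OF less.prems(1)]
          in_FI_face_restr[OF less.prems(2)] upd_zero_rdom[OF less.prems(3)]] less.prems(4) u_eq
      by (simp add: face_val_face_restr)
    then show ?thesis
      using face_retraction_face[OF less.prems(1) j(1) upd_zero_rdom[OF less.prems(3)], of "face_val \<psi>" b]
      by (simp add: u_eq face_val_face_restr)
  qed (simp add: face_retraction_top)
qed

lemma face_family_face_retraction: "face_family r (\<lambda>I \<psi>. face_retraction r I (face_val \<psi>))"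
  unfolding face_family_def
proof (intro allI impI conjI ballI)
  fix I \<psi> assume fin: "finite I" and \<psi>: "in_FI I \<psi>"
  show "face_retraction r I (face_val \<psi>) x \<in> rdom I" if "x \<in> rdom I" for x
    using face_retraction_rdom[OF fin that] .
  show "face_retraction r I (face_val \<psi>) x = face_retraction r I (face_val \<psi>') x"
    if "face_eq \<psi> \<psi>'" for \<psi>' x
    using face_eq_sound[OF that] by simp
  show "face_retraction r I (face_val \<psi>) x = x" if "face_eq \<psi> FTop" for x
    using face_retraction_top face_eq_FTop_iff[OF \<psi>] that by blast
  show "face_retraction r I (face_val \<psi>) x = face_retraction r I (face_val \<psi>) (r I x)"
    if "\<not> face_eq \<psi> FTop" "x \<in> rdom I" for x
    using face_retraction_absorb[OF fin _ that(2)] face_eq_FTop_iff[OF \<psi>] that(1) by simp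
  show "face_retraction r I (face_val \<psi>) (u, 0) = (u, 0)" if "(u, 0) \<in> rdom I" for u
    using face_retraction_zero[OF fin that] .
  show "face_retraction r I (face_val \<psi>) (face_ins i b u, z) =
      (face_ins i b (fst (face_retraction r (I - {i}) (face_val (face_restr \<psi> i b)) (u, z))),
       snd (face_retraction r (I - {i}) (face_val (face_restr \<psi> i b)) (u, z)))"
    if "i \<in> I" "(u, z) \<in> rdom (I - {i})" for i b u z
    using face_retraction_face[OF fin that] by (simp add: face_val_face_restr apfst_def map_prod_def split_beta)
qed

lemma face_retraction_fixed_iff:
  assumes "finite I" "in_FI I \<psi>" "(u, z) \<in> rdom I"
  shows "face_retraction r I (face_val \<psi>) (u, z) = (u, z) \<longleftrightarrow> face_val \<psi> u \<or> z = 0"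
  using face_retraction_image[OF assms(1,3), of "face_val \<psi>"]
    face_retraction_fixed[OF assms] face_retraction_zero[OF assms(1)] assms(3)
  by auto

lemma face_retraction_idem:
  assumes "finite I" "in_FI I \<psi>" "x \<in> rdom I"
  shows "face_retraction r I (face_val \<psi>) (face_retraction r I (face_val \<psi>) x) = face_retraction r I (face_val \<psi>) x"
proof -
  obtain u z where uz: "face_retraction r I (face_val \<psi>) x = (u, z)" by fastforce
  have "(u, z) \<in> rdom I" using face_retraction_rdom[OF assms(1,3)] uz by metis
  moreover have "face_val \<psi> u \<or> z = 0" using face_retraction_image[OF assms(1,3), of "face_val \<psi>"] uz by simp
  ultimately show ?thesis using face_retraction_fixed_iff[OF assms(1,2)] uz by simp
qed

end

lemma face_familyD:
  assumes "face_family r rp" "finite I" "in_FI I \<psi>"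
  shows face_family_top: "face_eq \<psi> FTop \<Longrightarrow> x \<in> rdom I \<Longrightarrow> rp I \<psi> x = x"
    and face_family_absorb: "\<not> face_eq \<psi> FTop \<Longrightarrow> x \<in> rdom I \<Longrightarrow> rp I \<psi> x = rp I \<psi> (r I x)"
    and face_family_zero: "(u, 0) \<in> rdom I \<Longrightarrow> rp I \<psi> (u, 0) = (u, 0)"
    and face_family_face: "i \<in> I \<Longrightarrow> (u, z) \<in> rdom (I - {i}) \<Longrightarrow>
      rp I \<psi> (face_ins i b u, z) = apfst (face_ins i b) (rp (I - {i}) (face_restr \<psi> i b) (u, z))"
  using assms(1) spec[OF spec[OF assms(1)[unfolded face_family_def], of I], of \<psi>] assms(2,3)
  by (simp_all add: apfst_def map_prod_def split_beta)

lemma face_family_unique: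
  assumes base: "base_family r" and ff: "face_family r rp" and ff': "face_family r rp'"
    and "finite I" "in_FI I \<psi>" "x \<in> rdom I"
  shows "rp I \<psi> x = rp' I \<psi> x"
  using assms(4-)
proof (induction "card I" arbitrary: I \<psi> x rule: less_induct)
  case less
  show ?case
  proof (cases "face_eq \<psi> FTop")
    case True
    then show ?thesis using face_family_top[OF ff less.prems(1,2)] face_family_top[OF ff' less.prems(1,2)] less.prems(3)
      by simp
  next
    case nontop: False
    obtain v z where vz: "r I x = (v, z)" by fastforce
    have vz_rdom: "(v, z) \<in> rdom I" using base_family_rdom[OF base less.prems(1,3)] vz by simp
    have "rp I \<psi> x = rp I \<psi> (v, z)" "rp' I \<psi> x = rp' I \<psi> (v, z)"
      using face_family_absorb[OF ff less.prems(1,2) nontop less.prems(3)]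
        face_family_absorb[OF ff' less.prems(1,2) nontop less.prems(3)] vz by simp_all
    moreover have "rp I \<psi> (v, z) = rp' I \<psi> (v, z)"
    proof (cases "z = 0")
      case True
      then show ?thesis using face_family_zero[OF ff] face_family_zero[OF ff'] less.prems(1,2) vz_rdom by simp
    next
      case False
      then have "bdry I v" using base_family_image[OF base less.prems(1,3) vz] by simp
      then obtain j where j: "j \<in> I" "v j = 0 \<or> v j = 1" unfolding bdry_def by blast
      define b where "b = (v j = 1)"
      have v_eq: "face_ins j b (v(j := 0)) = v" using face_ins_upd_zero[of v j] j(2) by (simp add: b_def)
      have w: "(v(j := 0), z) \<in> rdom (I - {j})" using upd_zero_rdom[OF vz_rdom] .
      have "rp (I - {j}) (face_restr \<psi> j b) (v(j := 0), z) = rp' (I - {j}) (face_restr \<psi> j b) (v(j := 0), z)"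
        using less.hyps[OF card_Diff1_less[OF less.prems(1) j(1)] finite_Diff[OF less.prems(1)]
            in_FI_face_restr[OF less.prems(2)] w] .
      then show ?thesis
        using face_family_face[OF ff less.prems(1,2) j(1) w, of b] face_family_face[OF ff' less.prems(1,2) j(1) w, of b]
        by (simp add: v_eq)
    qed
    ultimately show ?thesis by simp
  qed
qed

theorem mainTheorem5:
  fixes r :: "name set \<Rightarrow> pt \<Rightarrow> pt"
  assumes "base_family r"
  shows "\<exists>rp. face_family r rp
           \<and> (\<forall>rp'. face_family r rp' \<longrightarrow>
                (\<forall>I \<psi>. finite I \<longrightarrow> in_FI I \<psi> \<longrightarrow> (\<forall>x\<in>rdom I. rp' I \<psi> x = rp I \<psi> x)))
           \<and> (\<forall>I \<psi>. finite I \<longrightarrow> in_FI I \<psi> \<longrightarrow>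
                (\<forall>x\<in>rdom I. rp I \<psi> (rp I \<psi> x) = rp I \<psi> x) \<and>
                (\<forall>u z. (u, z) \<in> rdom I \<longrightarrow> (rp I \<psi> (u, z) = (u, z) \<longleftrightarrow> face_val \<psi> u \<or> z = 0)))"
proof (intro exI[of _ "\<lambda>I \<psi>. face_retraction r I (face_val \<psi>)"] conjI allI impI ballI)
  show family: "face_family r (\<lambda>I \<psi>. face_retraction r I (face_val \<psi>))"
    using face_family_face_retraction[OF assms] .
  show "rp' I \<psi> x = face_retraction r I (face_val \<psi>) x"
    if "face_family r rp'" "finite I" "in_FI I \<psi>" "x \<in> rdom I" for rp' I \<psi> x
    using face_family_unique[OF assms that(1) family that(2-)] by simp
qed (use face_retraction_idem[OF assms] face_retraction_fixed_iff[OF assms] in auto)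

end
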